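(* Let $\mathsf{L}$ be an intermediate logic. Every consistent formula of the form $\neg\phi$ is $\mathcal{ST}$-projective in $\mathsf{L}^\neg$, where $\mathcal{ST}$ is the class of all substitutions that are stable in $\mathsf{L}^\neg$.
   Context: Formulas are built from propositional variables, $\bot,\top$ with $\wedge,\vee,\to$; $\neg\phi:=\phi\to\bot$. An intermediate theory is a set $\mathsf T$ of formulas closed under modus ponens with $\mathsf{IPC}\subseteq\mathsf T\subseteq\mathsf{CPC}$; an intermediate logic is an intermediate theory closed under uniform substitution. $\Gamma\vdash_{\mathsf T}\phi$ means $\phi$ is derivable from $\Gamma\cup\mathsf T$ by modus ponens; $\vdash_{\mathsf T}\phi$ means $\phi\in\mathsf T$. For an intermediate logic $\mathsf L$, $\phi^\neg$ is obtained by replacing every propositional variable $p$ in $\phi$ by $\neg p$, and $\mathsf L^\neg=\{\phi\mid\phi^\neg\in\mathsf L\}$. A substitution is a map on formulas commuting with the connectives and constants; it is stable in $\mathsf L^\neg$ if $\vdash_{\mathsf L^\neg}\sigma(p)\leftrightarrow\neg\neg\sigma(p)$ for all propositional variables $p$. A formula $\psi$ is consistent if $\psi\nvdash_{\mathsf L^\neg}\bot$. For a set $\mathcal S$ of substitutions, $\psi$ is $\mathcal S$-projective in $\mathsf L^\neg$ if there is $\sigma\in\mathcal S$ with $\vdash_{\mathsf L^\neg}\sigma(\psi)$, and $\psi,\sigma(p)\vdash_{\mathsf L^\neg}p$ and $\psi,p\vdash_{\mathsf L^\neg}\sigma(p)$ for all propositional variables $p$. *)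

theory Defs
  imports Main
begin

datatype form = Var nat | Bot | Top | And form form | Or form form | Imp form form

definition Neg :: "form \<Rightarrow> form" where "Neg \<phi> = Imp \<phi> Bot"

definition Iff :: "form \<Rightarrow> form \<Rightarrow> form" where
  "Iff \<phi> \<psi> = And (Imp \<phi> \<psi>) (Imp \<psi> \<phi>)"

type_synonym subst = "nat \<Rightarrow> form"

fun apply_subst :: "subst \<Rightarrow> form \<Rightarrow> form" where
  "apply_subst s (Var p) = s p"
| "apply_subst s Bot = Bot"
| "apply_subst s Top = Top"
| "apply_subst s (And a b) = And (apply_subst s a) (apply_subst s b)"
| "apply_subst s (Or a b) = Or (apply_subst s a) (apply_subst s b)"
| "apply_subst s (Imp a b) = Imp (apply_subst s a) (apply_subst s b)"

inductive_set IPC :: "form set" where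
  ax1: "Imp a (Imp b a) \<in> IPC"
| ax2: "Imp (Imp a (Imp b c)) (Imp (Imp a b) (Imp a c)) \<in> IPC"
| ax3: "Imp (And a b) a \<in> IPC"
| ax4: "Imp (And a b) b \<in> IPC"
| ax5: "Imp a (Imp b (And a b)) \<in> IPC"
| ax6: "Imp a (Or a b) \<in> IPC"
| ax7: "Imp b (Or a b) \<in> IPC"
| ax8: "Imp (Imp a c) (Imp (Imp b c) (Imp (Or a b) c)) \<in> IPC"
| ax9: "Imp Bot a \<in> IPC"
| ax10: "Top \<in> IPC"
| mp: "Imp a b \<in> IPC \<Longrightarrow> a \<in> IPC \<Longrightarrow> b \<in> IPC"

fun eval :: "(nat \<Rightarrow> bool) \<Rightarrow> form \<Rightarrow> bool" where
  "eval v (Var p) = v p"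
| "eval v Bot = False"
| "eval v Top = True"
| "eval v (And a b) = (eval v a \<and> eval v b)"
| "eval v (Or a b) = (eval v a \<or> eval v b)"
| "eval v (Imp a b) = (eval v a \<longrightarrow> eval v b)"

definition CPC :: "form set" where "CPC = {\<phi>. \<forall>v. eval v \<phi>}"

definition closed_mp :: "form set \<Rightarrow> bool" where
  "closed_mp T \<longleftrightarrow> (\<forall>a b. Imp a b \<in> T \<longrightarrow> a \<in> T \<longrightarrow> b \<in> T)"

definition intermediate_theory :: "form set \<Rightarrow> bool" where
  "intermediate_theory T \<longleftrightarrow> closed_mp T \<and> IPC \<subseteq> T \<and> T \<subseteq> CPC"

definition intermediate_logic :: "form set \<Rightarrow> bool" where
  "intermediate_logic L \<longleftrightarrow> intermediate_theory L \<and>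
     (\<forall>s \<phi>. \<phi> \<in> L \<longrightarrow> apply_subst s \<phi> \<in> L)"

inductive derives :: "form set \<Rightarrow> form set \<Rightarrow> form \<Rightarrow> bool" for T :: "form set" where
  hyp: "\<phi> \<in> \<Gamma> \<Longrightarrow> derives T \<Gamma> \<phi>"
| thy: "\<phi> \<in> T \<Longrightarrow> derives T \<Gamma> \<phi>"
| mp: "derives T \<Gamma> (Imp a b) \<Longrightarrow> derives T \<Gamma> a \<Longrightarrow> derives T \<Gamma> b"

definition neg_trans :: "form \<Rightarrow> form" where
  "neg_trans \<phi> = apply_subst (\<lambda>p. Neg (Var p)) \<phi>"

definition neg_logic :: "form set \<Rightarrow> form set" where
  "neg_logic L = {\<phi>. neg_trans \<phi> \<in> L}"

definition stable_in :: "form set \<Rightarrow> subst \<Rightarrow> bool" where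
  "stable_in T s \<longleftrightarrow> (\<forall>p. derives T {} (Iff (s p) (Neg (Neg (s p)))))"

definition consistent_in :: "form set \<Rightarrow> form \<Rightarrow> bool" where
  "consistent_in T \<psi> \<longleftrightarrow> \<not> derives T {\<psi>} Bot"

definition projective_in :: "subst set \<Rightarrow> form set \<Rightarrow> form \<Rightarrow> bool" where
  "projective_in S T \<psi> \<longleftrightarrow> (\<exists>s\<in>S. derives T {} (apply_subst s \<psi>) \<and>
      (\<forall>p. derives T {\<psi>, s p} (Var p) \<and> derives T {\<psi>, Var p} (s p)))"

end

theory Submission
  imports Defs
begin

text \<open>Since \<open>L\<^sup>\<not>\<close> contains IPC, Glivenko's theorem shows that consistency of \<open>\<not>\<phi>\<close> forces \<open>\<phi>\<close>
  to be classically refutable, say by the valuation \<open>w\<close>. With \<open>\<psi> = \<not>\<phi>\<close> put \<open>\<sigma>(p) = \<psi> \<rightarrow> p\<close>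
  if \<open>w p\<close> and \<open>\<sigma>(p) = \<psi> \<and> p\<close> otherwise. Under the hypothesis \<open>\<psi>\<close>, \<open>\<sigma>\<close> is the identity up to
  equivalence, so \<open>\<psi>\<close> refutes \<open>\<sigma>(\<phi>)\<close>; under \<open>\<not>\<psi>\<close>, \<open>\<sigma>\<close> sends each variable to \<open>\<top>\<close> or \<open>\<bottom>\<close>
  according to \<open>w\<close>, so Kalmar's lemma refutes \<open>\<sigma>(\<phi>)\<close> as well. Because the goal \<open>\<not>\<sigma>(\<phi>)\<close> is a
  negation, this case split on \<open>\<psi>\<close> is intuitionistically sound. Stability of \<open>\<sigma>\<close> holds since
  negations are stable, variables are stable in \<open>L\<^sup>\<not>\<close> (their translations are negations), and
  stability is preserved by \<open>\<and>\<close> and by \<open>\<rightarrow>\<close> into a stable formula.\<close>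

fun vars :: "form \<Rightarrow> nat set" where
  "vars (Var p) = {p}"
| "vars Bot = {}"
| "vars Top = {}"
| "vars (And a b) = vars a \<union> vars b"
| "vars (Or a b) = vars a \<union> vars b"
| "vars (Imp a b) = vars a \<union> vars b"

lemma finite_vars: "finite (vars x)"
  by (induction x) auto

lemma apply_subst_Neg [simp]: "apply_subst s (Neg a) = Neg (apply_subst s a)"
  by (simp add: Neg_def)

lemma apply_subst_Var_id [simp]: "apply_subst Var x = x"
  by (induction x) auto

lemma eval_apply_subst: "eval v (apply_subst s x) = eval (\<lambda>p. eval v (s p)) x"
  by (induction x) auto

lemma IPC_closed_subst: "x \<in> IPC \<Longrightarrow> apply_subst s x \<in> IPC"
  by (induction rule: IPC.induct) (auto intro: IPC.intros)

lemma derives_IPC_empty: "derives IPC {} x \<Longrightarrow> x \<in> IPC"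
  by (induction "{}::form set" x rule: derives.induct) (auto intro: IPC.mp)

definition signed :: "bool \<Rightarrow> form \<Rightarrow> form" where
  "signed b a = (if b then a else Neg a)"

locale ipc_extension =
  fixes T :: "form set"
  assumes IPC_subset: "IPC \<subseteq> T"
begin

abbreviation derivable :: "form set \<Rightarrow> form \<Rightarrow> bool" (infix "\<turnstile>" 55) where
  "\<Gamma> \<turnstile> a \<equiv> derives T \<Gamma> a"

lemma axiom: "x \<in> IPC \<Longrightarrow> \<Gamma> \<turnstile> x"
  using IPC_subset by (auto intro: derives.thy)

lemma mono: "\<Gamma> \<turnstile> a \<Longrightarrow> \<Gamma> \<subseteq> \<Delta> \<Longrightarrow> \<Delta> \<turnstile> a"
  by (induction rule: derives.induct) (auto intro: derives.intros)

lemma weaken: "\<Gamma> \<turnstile> a \<Longrightarrow> insert b \<Gamma> \<turnstile> a"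
  using mono by blast

lemma hyp1: "insert a \<Gamma> \<turnstile> a"
  and hyp2: "insert b (insert a \<Gamma>) \<turnstile> a"
  and hyp3: "insert c (insert b (insert a \<Gamma>)) \<turnstile> a"
  by (auto intro: derives.hyp)

lemma imp_refl: "\<Gamma> \<turnstile> Imp a a"
  using derives.mp[OF derives.mp[OF axiom[OF IPC.ax2] axiom[OF IPC.ax1]] axiom[OF IPC.ax1]] .

lemma impI: "insert a \<Gamma> \<turnstile> b \<Longrightarrow> \<Gamma> \<turnstile> Imp a b"
proof (induction "insert a \<Gamma>" b rule: derives.induct)
  case (hyp \<phi>)
  then show ?case
    using imp_refl derives.mp[OF axiom[OF IPC.ax1] derives.hyp] by blast
next
  case (thy \<phi>)
  then show ?case using derives.mp[OF axiom[OF IPC.ax1] derives.thy] by blast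
next
  case (mp x b)
  then show ?case using derives.mp[OF derives.mp[OF axiom[OF IPC.ax2]]] by blast
qed

lemmas impE = derives.mp[of T]

lemma deduction: "\<Gamma> \<turnstile> Imp a b \<longleftrightarrow> insert a \<Gamma> \<turnstile> b"
  using impI impE[OF weaken hyp1] by blast

lemma andI: "\<Gamma> \<turnstile> a \<Longrightarrow> \<Gamma> \<turnstile> b \<Longrightarrow> \<Gamma> \<turnstile> And a b"
  using impE[OF impE[OF axiom[OF IPC.ax5]]] by blast

lemma andE1: "\<Gamma> \<turnstile> And a b \<Longrightarrow> \<Gamma> \<turnstile> a"
  using impE[OF axiom[OF IPC.ax3]] by blast

lemma andE2: "\<Gamma> \<turnstile> And a b \<Longrightarrow> \<Gamma> \<turnstile> b"
  using impE[OF axiom[OF IPC.ax4]] by blast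

lemma And_iff: "\<Gamma> \<turnstile> And a b \<longleftrightarrow> \<Gamma> \<turnstile> a \<and> \<Gamma> \<turnstile> b"
  using andI andE1 andE2 by blast

lemma orI1: "\<Gamma> \<turnstile> a \<Longrightarrow> \<Gamma> \<turnstile> Or a b"
  using impE[OF axiom[OF IPC.ax6]] by blast

lemma orI2: "\<Gamma> \<turnstile> b \<Longrightarrow> \<Gamma> \<turnstile> Or a b"
  using impE[OF axiom[OF IPC.ax7]] by blast

lemma orE: "\<Gamma> \<turnstile> Or a b \<Longrightarrow> insert a \<Gamma> \<turnstile> c \<Longrightarrow> insert b \<Gamma> \<turnstile> c \<Longrightarrow> \<Gamma> \<turnstile> c"
  using impE[OF impE[OF impE[OF axiom[OF IPC.ax8] impI] impI]] by blast

lemma botE: "\<Gamma> \<turnstile> Bot \<Longrightarrow> \<Gamma> \<turnstile> a"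
  using impE[OF axiom[OF IPC.ax9]] by blast

lemma negI: "insert a \<Gamma> \<turnstile> Bot \<Longrightarrow> \<Gamma> \<turnstile> Neg a"
  unfolding Neg_def by (rule impI)

lemma negE: "\<Gamma> \<turnstile> Neg a \<Longrightarrow> \<Gamma> \<turnstile> a \<Longrightarrow> \<Gamma> \<turnstile> Bot"
  unfolding Neg_def by (rule impE)

lemma notnotI: "\<Gamma> \<turnstile> Imp a (Neg (Neg a))"
  by (intro impI negI) (rule negE[OF hyp1 hyp2])

lemma triple_neg_stable: "\<Gamma> \<turnstile> Imp (Neg (Neg (Neg a))) (Neg a)"
  by (intro impI negI) (rule negE[OF hyp2 impE[OF notnotI hyp1]])

lemma cut: "\<Gamma> \<turnstile> a \<Longrightarrow> insert a \<Gamma> \<turnstile> b \<Longrightarrow> \<Gamma> \<turnstile> b"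
  using impE impI by blast

lemma hyp_cong:
  assumes "insert a \<Gamma> \<turnstile> b" and "insert b \<Gamma> \<turnstile> a"
  shows "insert a \<Gamma> \<turnstile> c \<longleftrightarrow> insert b \<Gamma> \<turnstile> c"
proof
  assume "insert a \<Gamma> \<turnstile> c"
  then show "insert b \<Gamma> \<turnstile> c"
    by (intro cut[OF assms(2)]) (erule mono, blast)
next
  assume "insert b \<Gamma> \<turnstile> c"
  then show "insert a \<Gamma> \<turnstile> c"
    by (intro cut[OF assms(1)]) (erule mono, blast)
qed

lemma neg_cases:
  assumes "insert a \<Gamma> \<turnstile> Neg c" and "insert (Neg a) \<Gamma> \<turnstile> Neg c"
  shows "\<Gamma> \<turnstile> Neg c"
proof (rule negI)
  have "insert c (insert a \<Gamma>) \<turnstile> Bot"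
    by (rule negE[OF weaken[OF assms(1)] hyp1])
  then have "insert c \<Gamma> \<turnstile> Neg a"
    by (intro negI) (erule mono, blast)
  moreover have "insert (Neg a) (insert c \<Gamma>) \<turnstile> Neg c"
    by (rule mono[OF assms(2)]) blast
  ultimately have "insert c \<Gamma> \<turnstile> Neg c"
    by (rule cut)
  then show "insert c \<Gamma> \<turnstile> Bot"
    by (rule negE) (rule hyp1)
qed

lemma neg_And1: "\<Gamma> \<turnstile> Neg a \<Longrightarrow> \<Gamma> \<turnstile> Neg (And a b)"
  by (intro negI) (rule negE[OF weaken andE1[OF hyp1]])

lemma neg_And2: "\<Gamma> \<turnstile> Neg b \<Longrightarrow> \<Gamma> \<turnstile> Neg (And a b)"
  by (intro negI) (rule negE[OF weaken andE2[OF hyp1]])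

lemma neg_Or: "\<Gamma> \<turnstile> Neg a \<Longrightarrow> \<Gamma> \<turnstile> Neg b \<Longrightarrow> \<Gamma> \<turnstile> Neg (Or a b)"
  by (intro negI) (rule orE[OF hyp1]; rule negE[OF weaken[OF weaken] hyp1])

lemma neg_Imp: "\<Gamma> \<turnstile> a \<Longrightarrow> \<Gamma> \<turnstile> Neg b \<Longrightarrow> \<Gamma> \<turnstile> Neg (Imp a b)"
  by (intro negI) (rule negE[OF weaken impE[OF hyp1 weaken]])

lemma Imp_if_neg: "\<Gamma> \<turnstile> Neg a \<Longrightarrow> \<Gamma> \<turnstile> Imp a b"
  by (intro impI) (rule botE, rule negE[OF weaken hyp1])

lemma Imp_if_concl: "\<Gamma> \<turnstile> b \<Longrightarrow> \<Gamma> \<turnstile> Imp a b"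
  by (intro impI) (rule weaken)

lemma kalmar:
  assumes "\<And>p. p \<in> vars x \<Longrightarrow> \<Gamma> \<turnstile> signed (w p) (s p)"
  shows "\<Gamma> \<turnstile> signed (eval w x) (apply_subst s x)"
  using assms
proof (induction x)
  case Bot
  show ?case by (simp add: signed_def negI hyp1)
next
  case Top
  show ?case by (simp add: signed_def axiom IPC.ax10)
next
  case (And a b)
  then have "\<Gamma> \<turnstile> signed (eval w a) (apply_subst s a)" "\<Gamma> \<turnstile> signed (eval w b) (apply_subst s b)"
    by auto
  then show ?case
    by (cases "eval w a"; cases "eval w b") (simp_all add: signed_def andI neg_And1 neg_And2)
next
  case (Or a b)
  then have "\<Gamma> \<turnstile> signed (eval w a) (apply_subst s a)" "\<Gamma> \<turnstile> signed (eval w b) (apply_subst s b)"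
    by auto
  then show ?case
    by (cases "eval w a"; cases "eval w b") (simp_all add: signed_def orI1 orI2 neg_Or)
next
  case (Imp a b)
  then have "\<Gamma> \<turnstile> signed (eval w a) (apply_subst s a)" "\<Gamma> \<turnstile> signed (eval w b) (apply_subst s b)"
    by auto
  then show ?case
    by (cases "eval w a"; cases "eval w b")
      (simp_all add: signed_def neg_Imp Imp_if_neg Imp_if_concl)
qed simp

lemma neg_by_literals:
  assumes "finite S" and "\<And>v. (\<lambda>p. signed (v p) (Var p)) ` S \<union> \<Gamma> \<turnstile> Neg c"
  shows "\<Gamma> \<turnstile> Neg c"
  using assms
proof (induction S rule: finite_induct)
  case empty
  then show ?case by simp
next
  case (insert q S)
  have "(\<lambda>p. signed (v p) (Var p)) ` S \<union> \<Gamma> \<turnstile> Neg c" for v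
  proof (rule neg_cases)
    have "(\<lambda>p. signed ((v(q := b)) p) (Var p)) ` S = (\<lambda>p. signed (v p) (Var p)) ` S" for b
      using \<open>q \<notin> S\<close> by (auto intro!: image_cong)
    then show "insert (Var q) ((\<lambda>p. signed (v p) (Var p)) ` S \<union> \<Gamma>) \<turnstile> Neg c"
      and "insert (Neg (Var q)) ((\<lambda>p. signed (v p) (Var p)) ` S \<union> \<Gamma>) \<turnstile> Neg c"
      using insert.prems[of "v(q := True)"] insert.prems[of "v(q := False)"]
      by (simp_all add: signed_def)
  qed
  then show ?case by (rule insert.IH)
qed

lemma glivenko:
  assumes "\<And>v. eval v x"
  shows "\<Gamma> \<turnstile> Neg (Neg x)"
proof (rule neg_by_literals[OF finite_vars])
  fix v
  have "(\<lambda>p. signed (v p) (Var p)) ` vars x \<union> \<Gamma> \<turnstile> signed (eval v x) (apply_subst Var x)"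
    by (rule kalmar) (auto intro: derives.hyp)
  then show "(\<lambda>p. signed (v p) (Var p)) ` vars x \<union> \<Gamma> \<turnstile> Neg (Neg x)"
    using assms impE[OF notnotI] by (simp add: signed_def)
qed

lemma apply_subst_equiv:
  assumes to_Var: "\<And>p. insert (s p) \<Gamma> \<turnstile> Var p"
    and from_Var: "\<And>p. insert (Var p) \<Gamma> \<turnstile> s p"
    and "\<Gamma> \<subseteq> \<Delta>"
  shows "\<Delta> \<turnstile> apply_subst s x \<longleftrightarrow> \<Delta> \<turnstile> x"
  using \<open>\<Gamma> \<subseteq> \<Delta>\<close>
proof (induction x arbitrary: \<Delta>)
  case (Var p)
  have "insert (s p) \<Delta> \<turnstile> Var p" "insert (Var p) \<Delta> \<turnstile> s p"
    using Var.prems by (auto intro: mono[OF to_Var] mono[OF from_Var])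
  then show ?case
    using cut[of \<Delta> "s p" "Var p"] cut[of \<Delta> "Var p" "s p"] by auto
next
  case (And a b)
  then show ?case
    by (simp add: And_iff)
next
  case (Or a b)
  have sa: "insert a \<Delta> \<turnstile> c \<longleftrightarrow> insert (apply_subst s a) \<Delta> \<turnstile> c" for c
    using Or.IH(1)[of "insert a \<Delta>"] Or.IH(1)[of "insert (apply_subst s a) \<Delta>"] Or.prems
    by (intro hyp_cong) (auto simp: hyp1)
  have sb: "insert b \<Delta> \<turnstile> c \<longleftrightarrow> insert (apply_subst s b) \<Delta> \<turnstile> c" for c
    using Or.IH(2)[of "insert b \<Delta>"] Or.IH(2)[of "insert (apply_subst s b) \<Delta>"] Or.prems
    by (intro hyp_cong) (auto simp: hyp1)
  show ?case
  proof
    assume "\<Delta> \<turnstile> apply_subst s (Or a b)"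
    then show "\<Delta> \<turnstile> Or a b"
      by (simp, elim orE) (unfold sa[symmetric] sb[symmetric]; intro orI1 orI2 hyp1)+
  next
    assume "\<Delta> \<turnstile> Or a b"
    then show "\<Delta> \<turnstile> apply_subst s (Or a b)"
      by (simp, elim orE) (unfold sa sb; intro orI1 orI2 hyp1)+
  qed
next
  case (Imp a b)
  have "insert a \<Delta> \<turnstile> c \<longleftrightarrow> insert (apply_subst s a) \<Delta> \<turnstile> c" for c
    using Imp.IH(1)[of "insert a \<Delta>"] Imp.IH(1)[of "insert (apply_subst s a) \<Delta>"] Imp.prems
    by (intro hyp_cong) (auto simp: hyp1)
  moreover have "insert c \<Delta> \<turnstile> apply_subst s b \<longleftrightarrow> insert c \<Delta> \<turnstile> b" for c
    using Imp.IH(2) Imp.prems by blast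
  ultimately show ?case
    by (simp add: deduction)
qed simp_all

lemma stable_Imp:
  assumes "\<Gamma> \<turnstile> Imp (Neg (Neg b)) b"
  shows "\<Gamma> \<turnstile> Imp (Neg (Neg (Imp a b))) (Imp a b)"
proof (intro impI)
  let ?\<Delta> = "insert a (insert (Neg (Neg (Imp a b))) \<Gamma>)"
  have "insert (Neg b) ?\<Delta> \<turnstile> Neg (Imp a b)"
    by (intro negI) (rule negE[OF hyp2 impE[OF hyp1 hyp3]])
  then have "?\<Delta> \<turnstile> Neg (Neg b)"
    by (intro negI) (rule negE[OF hyp3])
  then show "?\<Delta> \<turnstile> b"
    by (rule impE[OF weaken[OF weaken[OF assms]]])
qed

lemma stable_And:
  assumes "\<Gamma> \<turnstile> Imp (Neg (Neg a)) a" and "\<Gamma> \<turnstile> Imp (Neg (Neg b)) b"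
  shows "\<Gamma> \<turnstile> Imp (Neg (Neg (And a b))) (And a b)"
proof (intro impI andI)
  let ?\<Delta> = "insert (Neg (Neg (And a b))) \<Gamma>"
  have "?\<Delta> \<turnstile> Neg (Neg a)" "?\<Delta> \<turnstile> Neg (Neg b)"
    by (intro negI; rule negE[OF hyp2]; intro neg_And1 neg_And2; rule hyp1)+
  then show "?\<Delta> \<turnstile> a" "?\<Delta> \<turnstile> b"
    using impE[OF weaken[OF assms(1)]] impE[OF weaken[OF assms(2)]] by blast+
qed

end

definition proj_subst :: "form \<Rightarrow> (nat \<Rightarrow> bool) \<Rightarrow> subst" where
  "proj_subst \<psi> w p = (if w p then Imp \<psi> (Var p) else And \<psi> (Var p))"

context ipc_extension
begin

lemma proj_subst_to_Var: "\<psi> \<in> \<Gamma> \<Longrightarrow> proj_subst \<psi> w p \<in> \<Gamma> \<Longrightarrow> \<Gamma> \<turnstile> Var p"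
  by (cases "w p") (auto simp: proj_subst_def intro: impE andE2 derives.hyp)

lemma proj_subst_from_Var: "\<psi> \<in> \<Gamma> \<Longrightarrow> Var p \<in> \<Gamma> \<Longrightarrow> \<Gamma> \<turnstile> proj_subst \<psi> w p"
  by (cases "w p") (auto simp: proj_subst_def intro: Imp_if_concl andI derives.hyp)

lemma proj_subst_signed: "Neg \<psi> \<in> \<Gamma> \<Longrightarrow> \<Gamma> \<turnstile> signed (w p) (proj_subst \<psi> w p)"
  by (cases "w p") (auto simp: proj_subst_def signed_def intro: Imp_if_neg neg_And1 derives.hyp)

lemma proj_subst_unifies:
  assumes "\<not> eval w \<phi>"
  shows "\<Gamma> \<turnstile> apply_subst (proj_subst (Neg \<phi>) w) (Neg \<phi>)"
proof -
  let ?\<sigma> = "proj_subst (Neg \<phi>) w"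
  have "insert (Neg \<phi>) \<Gamma> \<turnstile> apply_subst ?\<sigma> (Neg \<phi>)"
    by (subst apply_subst_equiv[where \<Gamma> = "insert (Neg \<phi>) \<Gamma>"])
      (auto intro: proj_subst_to_Var proj_subst_from_Var hyp1)
  moreover have "insert (Neg (Neg \<phi>)) \<Gamma> \<turnstile> signed (eval w \<phi>) (apply_subst ?\<sigma> \<phi>)"
    by (rule kalmar) (simp add: proj_subst_signed)
  ultimately show ?thesis
    using assms by (simp add: signed_def neg_cases)
qed

lemma proj_subst_stable:
  assumes "\<Gamma> \<turnstile> Imp (Neg (Neg \<psi>)) \<psi>" and "\<Gamma> \<turnstile> Imp (Neg (Neg (Var p))) (Var p)"
  shows "\<Gamma> \<turnstile> Imp (Neg (Neg (proj_subst \<psi> w p))) (proj_subst \<psi> w p)"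
  using assms by (simp add: proj_subst_def stable_Imp stable_And)

lemma stable_inI: "(\<And>p. {} \<turnstile> Imp (Neg (Neg (s p))) (s p)) \<Longrightarrow> stable_in T s"
  unfolding stable_in_def Iff_def by (simp add: And_iff notnotI)

end

interpretation ipc: ipc_extension IPC
  by unfold_locales simp

lemma IPC_subset_neg_logic: "IPC \<subseteq> L \<Longrightarrow> IPC \<subseteq> neg_logic L"
  unfolding neg_logic_def neg_trans_def using IPC_closed_subst by blast

lemma Var_stable_neg_logic: "IPC \<subseteq> L \<Longrightarrow> Imp (Neg (Neg (Var p))) (Var p) \<in> neg_logic L"
  using derives_IPC_empty[OF ipc.triple_neg_stable] by (auto simp: neg_logic_def neg_trans_def)

lemma refutable_if_consistent_neg_logic:
  assumes "IPC \<subseteq> L" and "consistent_in (neg_logic L) (Neg \<phi>)"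
  shows "\<exists>w. \<not> eval w \<phi>"
proof (rule ccontr)
  assume "\<nexists>w. \<not> eval w \<phi>"
  then have "Neg (Neg (neg_trans \<phi>)) \<in> IPC"
    by (intro derives_IPC_empty ipc.glivenko) (simp add: neg_trans_def eval_apply_subst)
  then have "Imp (Neg \<phi>) Bot \<in> neg_logic L"
    using assms(1) by (auto simp: neg_logic_def neg_trans_def Neg_def[of "Neg _"])
  then have "derives (neg_logic L) {Neg \<phi>} Bot"
    by (rule derives.mp[OF derives.thy derives.hyp]) simp
  with assms(2) show False
    by (simp add: consistent_in_def)
qed

theorem lemma4p4:
  assumes "intermediate_logic L"
    and "consistent_in (neg_logic L) (Neg \<phi>)"
  shows "projective_in {s. stable_in (neg_logic L) s} (neg_logic L) (Neg \<phi>)"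
proof -
  have IPC_L: "IPC \<subseteq> L"
    using assms(1) by (simp add: intermediate_logic_def intermediate_theory_def)
  then interpret ipc_extension "neg_logic L"
    by unfold_locales (rule IPC_subset_neg_logic)
  obtain w where w: "\<not> eval w \<phi>"
    using refutable_if_consistent_neg_logic[OF IPC_L assms(2)] by blast
  let ?\<sigma> = "proj_subst (Neg \<phi>) w"
  have "stable_in (neg_logic L) ?\<sigma>"
    using triple_neg_stable derives.thy[OF Var_stable_neg_logic[OF IPC_L]]
    by (intro stable_inI proj_subst_stable)
  moreover have "derives (neg_logic L) {} (apply_subst ?\<sigma> (Neg \<phi>))"
    using w by (rule proj_subst_unifies)
  moreover have "derives (neg_logic L) {Neg \<phi>, ?\<sigma> p} (Var p)"
    and "derives (neg_logic L) {Neg \<phi>, Var p} (?\<sigma> p)" for p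
    by (auto intro: proj_subst_to_Var proj_subst_from_Var)
  ultimately show ?thesis
    unfolding projective_in_def by blast
qed

end
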